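(* If $\sum_{i=1}^M b_i\ge1$, then for every $\epsilon>0$, $$\bar\Delta_{\mathrm{opt}}(\epsilon)\ge\bar\Delta_{\mathrm{opt},2}(\epsilon)\ge\sum_{i=1}^M\Big[\frac{w_i}{\min\{b_i,\beta^\star\sqrt{w_i}\}}+w_i\Big],$$ where $\beta^\star\in[0,\max_l b_l/\sqrt{w_l}]$ is the root of $\sum_{i=1}^M\min\{b_i,\beta^\star\sqrt{w_i}\}=1$.
   Context: Fix an integer $M\ge1$, weights $w_1,\dots,w_M>0$, constants $b_1,\dots,b_M>0$, and $\epsilon>0$. For $\mathbf r\in(0,\infty)^M$ write $S(\mathbf r)=\sum_{i=1}^M r_i$ and define $$\bar\Delta(\mathbf r)=\sum_{l=1}^M \frac{w_l e^{-r_l\epsilon}}{r_l}\, e^{\epsilon S(\mathbf r)}\big(1+S(\mathbf r)\big)+\sum_{l=1}^M w_l,\qquad \sigma_l(\mathbf r)=\frac{(1-e^{-r_l\epsilon})S(\mathbf r)+r_le^{-r_l\epsilon}}{S(\mathbf r)+1}.$$ Problem 1: minimize $\bar\Delta(\mathbf r)$ over $\mathbf r\in(0,\infty)^M$ subject to $\sigma_l(\mathbf r)\le b_l$ for all $l$; its optimal (infimum) value is $\bar\Delta_{\mathrm{opt}}(\epsilon)$. Problem 2: minimize $\bar\Delta(\mathbf r)$ over $\mathbf r\in(0,\infty)^M$ subject to $r_l\le b_l\big(S(\mathbf r)+1\big)$ for all $l$; its optimal (infimum) value is $\bar\Delta_{\mathrm{opt},2}(\epsilon)$. *)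

theory Defs
  imports Complex_Main
begin

text \<open>Indices run over {1..M}; vectors are functions nat => real (values outside {1..M} are irrelevant).\<close>

definition Ssum :: "nat \<Rightarrow> (nat \<Rightarrow> real) \<Rightarrow> real" where
  "Ssum M r = (\<Sum>i=1..M. r i)"

definition Delta_bar :: "nat \<Rightarrow> (nat \<Rightarrow> real) \<Rightarrow> real \<Rightarrow> (nat \<Rightarrow> real) \<Rightarrow> real" where
  "Delta_bar M w eps r =
     (\<Sum>l=1..M. w l * exp (- r l * eps) / r l) * exp (eps * Ssum M r) * (1 + Ssum M r)
     + (\<Sum>l=1..M. w l)"

definition sigma :: "nat \<Rightarrow> real \<Rightarrow> (nat \<Rightarrow> real) \<Rightarrow> nat \<Rightarrow> real" where
  "sigma M eps r l =
     ((1 - exp (- r l * eps)) * Ssum M r + r l * exp (- r l * eps)) / (Ssum M r + 1)"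

definition feasible1 :: "nat \<Rightarrow> (nat \<Rightarrow> real) \<Rightarrow> real \<Rightarrow> (nat \<Rightarrow> real) set" where
  "feasible1 M b eps = {r. (\<forall>l\<in>{1..M}. 0 < r l) \<and> (\<forall>l\<in>{1..M}. sigma M eps r l \<le> b l)}"

definition feasible2 :: "nat \<Rightarrow> (nat \<Rightarrow> real) \<Rightarrow> (nat \<Rightarrow> real) set" where
  "feasible2 M b = {r. (\<forall>l\<in>{1..M}. 0 < r l) \<and> (\<forall>l\<in>{1..M}. r l \<le> b l * (Ssum M r + 1))}"

definition Delta_opt :: "nat \<Rightarrow> (nat \<Rightarrow> real) \<Rightarrow> (nat \<Rightarrow> real) \<Rightarrow> real \<Rightarrow> real" where
  "Delta_opt M w b eps = Inf (Delta_bar M w eps ` feasible1 M b eps)"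

definition Delta_opt2 :: "nat \<Rightarrow> (nat \<Rightarrow> real) \<Rightarrow> (nat \<Rightarrow> real) \<Rightarrow> real \<Rightarrow> real" where
  "Delta_opt2 M w b eps = Inf (Delta_bar M w eps ` feasible2 M b)"

end

theory Submission
  imports Defs
begin

text \<open>Since \<open>\<sigma>\<^sub>l (S + 1) = r\<^sub>l + (1 - exp (-r\<^sub>l \<epsilon>)) (S - r\<^sub>l) \<ge> r\<^sub>l\<close>, Problem 2 is a
  relaxation of Problem 1. On its feasible set, \<open>exp (-r\<^sub>l \<epsilon>) exp (\<epsilon> S) \<ge> 1\<close>, so
  \<open>\<Delta>(r) \<ge> \<Sum> w\<^sub>l / x\<^sub>l + \<Sum> w\<^sub>l\<close> for the shares \<open>x\<^sub>l = r\<^sub>l / (S + 1)\<close>, which satisfy \<open>x\<^sub>l \<le> b\<^sub>l\<close> and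
  \<open>\<Sum> x\<^sub>l \<le> 1\<close>. Minimising \<open>\<Sum> w\<^sub>l / x\<^sub>l\<close> under these constraints is a water-filling problem:
  with \<open>m\<^sub>l = min b\<^sub>l (\<beta> \<surd>w\<^sub>l)\<close> and Lagrange multiplier \<open>1 / \<beta>\<^sup>2\<close> one has
  \<open>w\<^sub>l / x\<^sub>l \<ge> w\<^sub>l / m\<^sub>l - (x\<^sub>l - m\<^sub>l) / \<beta>\<^sup>2\<close> termwise, and summing uses \<open>\<Sum> x\<^sub>l \<le> 1 = \<Sum> m\<^sub>l\<close>.\<close>

lemma div_min_sqrt_tangent_bound:
  fixes x b w beta :: real
  assumes x: "0 < x" "x \<le> b" and w: "0 < w" and beta: "0 < beta"
  defines "m \<equiv> min b (beta * sqrt w)"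
  shows "w / m - (x - m) / beta\<^sup>2 \<le> w / x"
proof -
  have m_pos: "0 < m" using x w beta by (simp add: m_def)
  show ?thesis
  proof (cases "beta * sqrt w \<le> b")
    case True
    then have "w = m\<^sup>2 / beta\<^sup>2" using beta w by (simp add: m_def power_mult_distrib)
    then have "w / x + (x - m) / beta\<^sup>2 - w / m = (m - x)\<^sup>2 / (x * beta\<^sup>2)"
      using x m_pos beta by (simp add: field_simps power2_eq_square)
    moreover have "0 \<le> (m - x)\<^sup>2 / (x * beta\<^sup>2)" using x by simp
    ultimately show ?thesis by linarith
  next
    case False
    then have m_eq: "m = b" and "m \<le> beta * sqrt w" by (simp_all add: m_def)
    then have "m\<^sup>2 \<le> (beta * sqrt w)\<^sup>2" using m_pos by (intro power_mono) auto
    then have w_ge: "m\<^sup>2 / beta\<^sup>2 \<le> w" using beta w by (simp add: power_mult_distrib field_simps)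
    have x_le: "x \<le> m" using x m_eq by simp
    have "1 \<le> m / x" and "0 \<le> (m - x) / beta\<^sup>2" using x x_le by simp_all
    then have "(m - x) / beta\<^sup>2 \<le> (m / x) * ((m - x) / beta\<^sup>2)"
      using mult_right_mono by fastforce
    also have "\<dots> = (m\<^sup>2 / beta\<^sup>2) * (m - x) / (x * m)"
      using x m_pos beta by (simp add: field_simps power2_eq_square)
    also have "\<dots> \<le> w * (m - x) / (x * m)"
      using w_ge x_le x m_pos by (intro divide_right_mono mult_right_mono) auto
    also have "\<dots> = w / x - w / m" using x m_pos by (simp add: field_simps)
    finally show ?thesis by (simp add: diff_divide_distrib)
  qed
qed

lemma sum_div_ge_water_filling:
  fixes x b w :: "'a \<Rightarrow> real" and beta :: real
  assumes "finite A"
    and x: "\<And>i. i \<in> A \<Longrightarrow> 0 < x i \<and> x i \<le> b i" and w: "\<And>i. i \<in> A \<Longrightarrow> 0 < w i"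
    and beta: "0 < beta"
    and budget: "(\<Sum>i\<in>A. x i) \<le> (\<Sum>i\<in>A. min (b i) (beta * sqrt (w i)))"
  shows "(\<Sum>i\<in>A. w i / min (b i) (beta * sqrt (w i))) \<le> (\<Sum>i\<in>A. w i / x i)"
proof -
  define m where "m i = min (b i) (beta * sqrt (w i))" for i
  have "(\<Sum>i\<in>A. w i / m i) - ((\<Sum>i\<in>A. x i) - (\<Sum>i\<in>A. m i)) / beta\<^sup>2
        = (\<Sum>i\<in>A. w i / m i - (x i - m i) / beta\<^sup>2)"
    by (simp add: sum_subtractf sum_divide_distrib diff_divide_distrib)
  also have "\<dots> \<le> (\<Sum>i\<in>A. w i / x i)"
    unfolding m_def using x w beta by (intro sum_mono div_min_sqrt_tangent_bound) auto
  finally show ?thesis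
    using budget beta divide_nonpos_pos[of "(\<Sum>i\<in>A. x i) - (\<Sum>i\<in>A. m i)" "beta\<^sup>2"]
    by (simp add: m_def)
qed

lemma Ssum_nonneg: "\<forall>l\<in>{1..M}. 0 < r l \<Longrightarrow> 0 \<le> Ssum M r"
  unfolding Ssum_def by (intro sum_nonneg less_imp_le) blast

lemma member_le_Ssum: "\<forall>l\<in>{1..M}. 0 < r l \<Longrightarrow> l \<in> {1..M} \<Longrightarrow> r l \<le> Ssum M r"
  unfolding Ssum_def by (intro member_le_sum less_imp_le) auto

lemma le_sigma_mult:
  assumes pos: "\<forall>l\<in>{1..M}. 0 < r l" and l: "l \<in> {1..M}" and eps: "0 \<le> eps"
  shows "r l \<le> sigma M eps r l * (Ssum M r + 1)"
proof -
  let ?S = "Ssum M r" and ?e = "exp (- r l * eps)"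
  have S_nonneg: "0 \<le> ?S" using Ssum_nonneg[OF pos] .
  have "?e \<le> 1" using pos l eps by (simp add: less_imp_le)
  moreover have "r l \<le> ?S" using member_le_Ssum[OF pos l] .
  ultimately have "r l \<le> (1 - ?e) * ?S + r l * ?e"
    using mult_mono[of 0 "1 - ?e" 0 "?S - r l"] by (simp add: algebra_simps)
  also have "\<dots> = sigma M eps r l * (?S + 1)"
    unfolding sigma_def using S_nonneg by (simp add: field_simps)
  finally show ?thesis .
qed

lemma sigma_le_mult_max:
  assumes pos: "\<forall>l\<in>{1..M}. 0 < r l" and l: "l \<in> {1..M}" and eps: "0 \<le> eps"
  shows "sigma M eps r l \<le> r l * max eps 1"
proof -
  let ?S = "Ssum M r" and ?e = "exp (- r l * eps)" and ?c = "r l * max eps 1"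
  have S_nonneg: "0 \<le> ?S" using Ssum_nonneg[OF pos] .
  have r_nonneg: "0 \<le> r l" using pos l by (simp add: less_imp_le)
  have "1 - ?e \<le> r l * eps" using exp_ge_add_one_self[of "- r l * eps"] by simp
  also have "\<dots> \<le> ?c" using r_nonneg by (intro mult_left_mono) auto
  finally have "(1 - ?e) * ?S \<le> ?c * ?S" using S_nonneg by (rule mult_right_mono)
  moreover have "r l * ?e \<le> r l * 1" using r_nonneg eps by (intro mult_left_mono) auto
  moreover have "r l * 1 \<le> ?c" using r_nonneg by (intro mult_left_mono) auto
  ultimately have "(1 - ?e) * ?S + r l * ?e \<le> ?c * (?S + 1)" by (simp add: algebra_simps)
  then show ?thesis unfolding sigma_def using S_nonneg by (simp add: divide_simps)
qed

lemma feasible1_subset_feasible2: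
  assumes "0 \<le> eps" shows "feasible1 M b eps \<subseteq> feasible2 M b"
proof
  fix r assume "r \<in> feasible1 M b eps"
  then have pos: "\<forall>l\<in>{1..M}. 0 < r l" and sigma_le: "\<forall>l\<in>{1..M}. sigma M eps r l \<le> b l"
    unfolding feasible1_def by auto
  have S_nonneg: "0 \<le> Ssum M r + 1" using Ssum_nonneg[OF pos] by simp
  have "r l \<le> b l * (Ssum M r + 1)" if l: "l \<in> {1..M}" for l
  proof -
    have "r l \<le> sigma M eps r l * (Ssum M r + 1)"
      using le_sigma_mult[OF pos l assms] .
    also have "\<dots> \<le> b l * (Ssum M r + 1)"
      using sigma_le l S_nonneg by (intro mult_right_mono) auto
    finally show ?thesis .
  qed
  then show "r \<in> feasible2 M b" using pos unfolding feasible2_def by blast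
qed

lemma feasible1_nonempty:
  assumes b: "\<forall>i\<in>{1..M}. 0 < b i" and eps: "0 \<le> eps"
  shows "feasible1 M b eps \<noteq> {}"
proof -
  define c where "c = Min (insert 1 (b ` {1..M})) / max eps 1"
  have c_pos: "0 < c" using b by (simp add: c_def Min_gr_iff)
  have "(\<lambda>_. c) \<in> feasible1 M b eps"
    unfolding feasible1_def
  proof safe
    fix l :: nat assume l: "l \<in> {1..M}"
    show "0 < c" by (fact c_pos)
    have "sigma M eps (\<lambda>_. c) l \<le> c * max eps 1"
      using sigma_le_mult_max[of M "\<lambda>_. c", OF _ l eps] c_pos by simp
    also have "\<dots> = Min (insert 1 (b ` {1..M}))" by (simp add: c_def)
    also have "\<dots> \<le> b l" using l by (intro Min_le) auto
    finally show "sigma M eps (\<lambda>_. c) l \<le> b l" .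
  qed
  then show ?thesis by blast
qed

lemma Delta_bar_nonneg:
  assumes "\<forall>i\<in>{1..M}. 0 < w i" "\<forall>l\<in>{1..M}. 0 < r l"
  shows "0 \<le> Delta_bar M w eps r"
  unfolding Delta_bar_def using assms Ssum_nonneg[OF assms(2)]
  by (intro add_nonneg_nonneg mult_nonneg_nonneg sum_nonneg) (auto intro: less_imp_le)

lemma Delta_bar_ge_sum_div_shares:
  assumes w: "\<forall>i\<in>{1..M}. 0 < w i" and pos: "\<forall>l\<in>{1..M}. 0 < r l" and eps: "0 \<le> eps"
  shows "(\<Sum>l=1..M. w l / (r l / (Ssum M r + 1)) + w l) \<le> Delta_bar M w eps r"
proof -
  let ?S = "Ssum M r"
  have S_nonneg: "0 \<le> ?S" using Ssum_nonneg[OF pos] .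
  have "w l / (r l / (?S + 1)) \<le> w l * exp (- r l * eps) / r l * exp (eps * ?S) * (1 + ?S)"
    if l: "l \<in> {1..M}" for l
  proof -
    have "1 \<le> exp (eps * (?S - r l))"
      using member_le_Ssum[OF pos l] eps by simp
    also have "\<dots> = exp (- r l * eps) * exp (eps * ?S)"
      by (simp add: exp_add[symmetric] algebra_simps)
    finally have "w l * (1 + ?S) / r l * 1
                  \<le> w l * (1 + ?S) / r l * (exp (- r l * eps) * exp (eps * ?S))"
      using w l pos S_nonneg by (intro mult_left_mono) (auto intro!: divide_nonneg_pos less_imp_le)
    then show ?thesis using S_nonneg by (simp add: field_simps)
  qed
  then have "(\<Sum>l=1..M. w l / (r l / (?S + 1)))
             \<le> (\<Sum>l=1..M. w l * exp (- r l * eps) / r l * exp (eps * ?S) * (1 + ?S))"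
    by (rule sum_mono)
  also have "\<dots> = (\<Sum>l=1..M. w l * exp (- r l * eps) / r l) * exp (eps * ?S) * (1 + ?S)"
    by (simp add: sum_distrib_right)
  finally show ?thesis unfolding Delta_bar_def by (simp add: sum.distrib)
qed

lemma sum_shares_le_one: "\<forall>l\<in>{1..M}. 0 < r l \<Longrightarrow> (\<Sum>l=1..M. r l / (Ssum M r + 1)) \<le> 1"
  unfolding sum_divide_distrib[symmetric] Ssum_def[symmetric] using Ssum_nonneg[of M r] by simp

lemma Delta_bar_ge_water_filling:
  assumes w: "\<forall>i\<in>{1..M}. 0 < w i" and eps: "0 \<le> eps" and beta: "0 < beta"
    and budget: "(\<Sum>i=1..M. min (b i) (beta * sqrt (w i))) = 1"
    and r: "r \<in> feasible2 M b"
  shows "(\<Sum>i=1..M. w i / min (b i) (beta * sqrt (w i)) + w i) \<le> Delta_bar M w eps r"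
proof -
  from r have pos: "\<forall>l\<in>{1..M}. 0 < r l" and rb: "\<forall>l\<in>{1..M}. r l \<le> b l * (Ssum M r + 1)"
    unfolding feasible2_def by auto
  define x where "x l = r l / (Ssum M r + 1)" for l
  have S_nonneg: "0 \<le> Ssum M r" using Ssum_nonneg[OF pos] .
  have "(\<Sum>i=1..M. w i / min (b i) (beta * sqrt (w i))) \<le> (\<Sum>i=1..M. w i / x i)"
  proof (rule sum_div_ge_water_filling)
    show "0 < x i \<and> x i \<le> b i" if "i \<in> {1..M}" for i
      using that pos rb S_nonneg by (simp add: x_def divide_simps mult.commute)
    show "(\<Sum>i=1..M. x i) \<le> (\<Sum>i=1..M. min (b i) (beta * sqrt (w i)))"
      unfolding budget x_def using sum_shares_le_one[OF pos] by simp
  qed (use w beta in auto)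
  then show ?thesis
    using Delta_bar_ge_sum_div_shares[OF w pos eps] by (simp add: x_def sum.distrib)
qed

theorem lemma3:
  fixes M :: nat and w b :: "nat \<Rightarrow> real" and eps beta :: real
  assumes "M \<ge> 1"
    and "\<forall>i\<in>{1..M}. 0 < w i"
    and "\<forall>i\<in>{1..M}. 0 < b i"
    and "eps > 0"
    and "(\<Sum>i=1..M. b i) \<ge> 1"
    and "0 \<le> beta" and "beta \<le> Max ((\<lambda>l. b l / sqrt (w l)) ` {1..M})"
    and "(\<Sum>i=1..M. min (b i) (beta * sqrt (w i))) = 1"
  shows "Delta_opt M w b eps \<ge> Delta_opt2 M w b eps
       \<and> Delta_opt2 M w b eps \<ge> (\<Sum>i=1..M. w i / min (b i) (beta * sqrt (w i)) + w i)"
proof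
  \<comment> \<open>The hypotheses on \<open>M\<close>, \<open>\<Sum> b\<^sub>i\<close> and the upper bound on \<open>\<beta>\<close> only ensure that such a \<open>\<beta>\<close> exists.\<close>
  have ne1: "feasible1 M b eps \<noteq> {}" using feasible1_nonempty assms(3,4) by simp
  have sub: "feasible1 M b eps \<subseteq> feasible2 M b" using feasible1_subset_feasible2 assms(4) by simp
  have bdd: "bdd_below (Delta_bar M w eps ` feasible2 M b)"
    by (rule bdd_belowI[of _ 0]) (use Delta_bar_nonneg assms(2) in \<open>auto simp: feasible2_def\<close>)
  have beta_pos: "0 < beta"
  proof (rule ccontr)
    assume "\<not> 0 < beta"
    then have "(\<Sum>i=1..M. min (b i) (beta * sqrt (w i))) = 0"
      using assms(3,6) by (intro sum.neutral) auto
    then show False using assms(8) by simp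
  qed
  show "Delta_opt M w b eps \<ge> Delta_opt2 M w b eps"
    unfolding Delta_opt_def Delta_opt2_def by (rule cInf_superset_mono) (use ne1 bdd sub in auto)
  show "Delta_opt2 M w b eps \<ge> (\<Sum>i=1..M. w i / min (b i) (beta * sqrt (w i)) + w i)"
    unfolding Delta_opt2_def
    by (rule cInf_greatest) (use ne1 sub Delta_bar_ge_water_filling beta_pos assms in auto)
qed

end
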